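(* Let $k\ge 2$ be an integer that is not a perfect square, and let $R_k\subseteq\{0,1,\dots,k-1\}$ be the set of remainders modulo $k$ of the indices $\xi$ of solutions of $T_\xi=kT_t$ (as defined in the context), with $\upsilon=|R_k|$. Then: (i) $0\in R_k$ and $k-1\in R_k$; (ii) for every $\mu\in R_k$ one also has $k-1-\mu\in R_k$, so that the remainders come in pairs $\{\mu,\,k-1-\mu\}$ whose sum is $k-1$; (iii) $\upsilon$ is even; (iv) $\sum_{\mu\in R_k}\mu=(k-1)\,\upsilon/2$.
   Context: For an integer $m\ge 0$, $T_m=m(m+1)/2$ denotes the $m$-th triangular number. For a non-square integer $k\ge 2$, consider the equation $T_\xi=k\,T_t$ in nonnegative integers $t,\xi$. Let $R_k=\{\xi \bmod k : \exists\, t\ge 0 \text{ with } T_\xi=kT_t\}$, the set of least nonnegative remainders modulo $k$ of all $\xi$ occurring in solutions $(t,\xi)$, and $\upsilon=|R_k|$. *)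

theory Defs
  imports Main
begin

definition tri :: "nat \<Rightarrow> nat" where
  "tri m = m * (m + 1) div 2"

definition residue_set :: "nat \<Rightarrow> nat set" where
  "residue_set k = {\<xi> mod k | \<xi>. \<exists>t. tri \<xi> = k * tri t}"

end

theory Submission
  imports Defs
    "HOL-Analysis.Kronecker_Approximation_Theorem"
    "HOL-Computational_Algebra.Nth_Powers"
    "HOL-Library.Disjoint_Sets"
    "HOL-Library.Z2"
begin

text \<open>
  Writing \<open>X = 2\<xi> + 1\<close> and \<open>Y = 2t + 1\<close>, the equation \<open>T\<^sub>\<xi> = k T\<^sub>t\<close> becomes
  \<open>X\<^sup>2 - k Y\<^sup>2 = 1 - k\<close>. The sign change \<open>X \<mapsto> -X\<close>, i.e. \<open>\<xi> \<mapsto> -1 - \<xi>\<close>, preserves this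
  equation, and composing it with a solution \<open>(a, b)\<close> of Pell's equation \<open>a\<^sup>2 - k b\<^sup>2 = 1\<close>
  with \<open>a \<equiv> 1 (mod 2k)\<close>, \<open>b\<close> even and \<open>a\<close> large yields a solution with positive
  \<open>X' \<equiv> -X (mod 2k)\<close>. So \<open>\<mu> \<mapsto> k - 1 - \<mu>\<close> maps \<open>R\<^sub>k\<close> to itself; it has no fixed point
  because \<open>k\<close> cannot divide \<open>X\<close> (as \<open>X\<^sup>2 \<equiv> 1 (mod k)\<close>). A fixed-point-free involution
  pairs up the elements of \<open>R\<^sub>k\<close>, which gives evenness and the sum formula.
  Pell's equation is solved via Dirichlet's approximation theorem and pigeonholing.
\<close>

section \<open>Pell's equation\<close>

lemma nonsquare_sq_eq_mult_sq_imp_zero: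
  fixes x y :: int
  assumes "\<not> (\<exists>m. m ^ 2 = k)" and "x\<^sup>2 = int k * y\<^sup>2"
  shows "y = 0"
proof (rule ccontr)
  assume "y \<noteq> 0"
  have "int ((nat \<bar>x\<bar>)\<^sup>2) = int (k * (nat \<bar>y\<bar>)\<^sup>2)"
    using assms(2) by simp
  then have "(nat \<bar>x\<bar>)\<^sup>2 = k * (nat \<bar>y\<bar>)\<^sup>2"
    by (simp only: of_nat_eq_iff)
  then have "is_nth_power 2 (k * (nat \<bar>y\<bar>)\<^sup>2)"
    by (metis is_nth_power_nth_power)
  then have "is_nth_power 2 k"
    using \<open>y \<noteq> 0\<close> is_nth_power_mult_cancel_right[of 2 "(nat \<bar>y\<bar>)\<^sup>2" k] by auto
  then show False
    using assms(1) by (auto elim: is_nth_powerE)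
qed

lemma sqrt_dirichlet_approx:
  fixes N :: nat
  assumes "N > 0"
  obtains x y :: int where "0 < y" "y \<le> int N" "\<bar>of_int y * sqrt k - of_int x\<bar> < 1 / N"
proof -
  obtain q :: int and p :: "nat \<Rightarrow> int"
    where "0 < q" "q \<le> int (N ^ 1)" "\<And>i. i < 1 \<Longrightarrow> \<bar>of_int q * sqrt k - of_int (p i)\<bar> < 1 / N"
    using Dirichlet_approx_simult[OF assms, where \<theta> = "\<lambda>_. sqrt k" and n = 1] by blast
  then show ?thesis
    using that[of q "p 0"] by auto
qed

lemma norm_le_of_good_approx:
  fixes x y :: int and N :: nat
  assumes "N > 0" "0 < y" "y \<le> int N" "\<bar>of_int y * sqrt k - of_int x\<bar> < 1 / N"
  shows "\<bar>x\<^sup>2 - int k * y\<^sup>2\<bar> \<le> 2 * int k + 1"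
proof -
  define d where "d = of_int y * sqrt k - of_int x"
  have "1 / real N \<le> 1"
    using assms(1) by simp
  then have d1: "\<bar>d\<bar> < 1"
    using assms(4) unfolding d_def by linarith
  have yd: "of_int y * \<bar>d\<bar> < 1"
  proof -
    have "of_int y * \<bar>d\<bar> \<le> real N * \<bar>d\<bar>"
      using assms(3) by (simp add: mult_right_mono)
    also have "\<dots> < real N * (1 / N)"
      using assms(1,4) unfolding d_def by (intro mult_strict_left_mono) auto
    finally show ?thesis
      using assms(1) by simp
  qed
  have sqrt_le: "sqrt k \<le> k"
    using real_sqrt_le_mono[of k "(real k)\<^sup>2"] by (cases k) (auto simp: power2_eq_square)
  have "real_of_int (x\<^sup>2 - int k * y\<^sup>2) = d\<^sup>2 - 2 * (of_int y * d) * sqrt k"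
    unfolding d_def by (simp add: power2_eq_square algebra_simps)
  moreover have "\<bar>d\<^sup>2 - 2 * (of_int y * d) * sqrt k\<bar> \<le> \<bar>d\<^sup>2\<bar> + \<bar>2 * (of_int y * d) * sqrt k\<bar>"
    by (rule abs_triangle_ineq4)
  ultimately have "\<bar>real_of_int (x\<^sup>2 - int k * y\<^sup>2)\<bar> \<le> d\<^sup>2 + 2 * (of_int y * \<bar>d\<bar>) * sqrt k"
    using assms(2) by (simp add: abs_mult)
  also have "\<dots> \<le> 1 + 2 * sqrt k"
    using d1 yd mult_right_mono[of "of_int y * \<bar>d\<bar>" 1 "sqrt k"] abs_square_less_1[of d]
    by simp
  finally show ?thesis
    using sqrt_le by linarith
qed

lemma infinite_small_norm:
  assumes "\<not> (\<exists>m. m ^ 2 = k)"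
  shows "infinite {(x :: int, y :: int). 0 < y \<and> \<bar>x\<^sup>2 - int k * y\<^sup>2\<bar> \<le> 2 * int k + 1}"
    (is "infinite ?P")
proof
  assume fin: "finite ?P"
  define g where "g = (\<lambda>(x :: int, y :: int). \<bar>of_int y * sqrt k - of_int x\<bar>)"
  have g_pos: "g p > 0" if p_mem: "p \<in> ?P" for p
  proof -
    obtain x y where p: "p = (x, y)" "0 < y"
      using p_mem by (cases p) auto
    have "of_int x \<noteq> of_int y * sqrt k"
    proof
      assume "of_int x = of_int y * sqrt k"
      then have "real_of_int (x\<^sup>2) = real_of_int (int k * y\<^sup>2)"
        by (simp add: power_mult_distrib)
      then have "y = 0"
        by (intro nonsquare_sq_eq_mult_sq_imp_zero[OF assms]) (simp only: of_int_eq_iff)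
      then show False
        using p by simp
    qed
    then show ?thesis
      using p by (auto simp: g_def)
  qed
  define \<delta> where "\<delta> = Min (insert 1 (g ` ?P))"
  have "\<delta> > 0"
    unfolding \<delta>_def using fin g_pos by (subst Min_gr_iff) auto
  then obtain N :: nat where N: "N > 1 / \<delta>"
    using reals_Archimedean2 by blast
  moreover have "1 / \<delta> > 0"
    using \<open>\<delta> > 0\<close> by simp
  ultimately have "N > 0"
    by linarith
  with N \<open>\<delta> > 0\<close> have "1 / real N < \<delta>"
    by (simp add: field_simps)
  obtain x y :: int where xy: "0 < y" "y \<le> int N" "\<bar>of_int y * sqrt k - of_int x\<bar> < 1 / N"
    using sqrt_dirichlet_approx[OF \<open>N > 0\<close>] by metis
  then have "(x, y) \<in> ?P"
    using norm_le_of_good_approx[OF \<open>N > 0\<close>] by auto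
  then have "\<delta> \<le> g (x, y)"
    unfolding \<delta>_def using fin by (intro Min_le) auto
  with xy(3) \<open>1 / real N < \<delta>\<close> show False
    by (simp add: g_def)
qed

text \<open>
  The quotient \<open>(x + y\<surd>K) / (x' + y'\<surd>K)\<close> of two points of norm \<open>n\<close> that are congruent
  modulo \<open>n\<close> has integral coordinates.
\<close>

lemma pell_solution_of_congruent_pair:
  fixes K x y x' y' n :: int
  assumes norm: "x\<^sup>2 - K * y\<^sup>2 = n" "x'\<^sup>2 - K * y'\<^sup>2 = n" and "n \<noteq> 0"
    and cong: "n dvd x' - x" "n dvd y' - y"
    and "(x', y') \<noteq> (x, y)" "y > 0" "y' > 0"
  shows "\<exists>u v. u\<^sup>2 - K * v\<^sup>2 = 1 \<and> v \<noteq> 0"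
proof -
  obtain a b where "x' - x = n * a" and "y' - y = n * b"
    using cong by (auto elim!: dvdE)
  then have x': "x' = x + n * a" and y': "y' = y + n * b"
    by simp_all
  define u where "u = 1 + x * a - K * y * b"
  define v where "v = x * b - a * y"
  have U: "x * x' - K * y * y' = n * u"
    unfolding u_def x' y' using norm(1) by (simp add: power2_eq_square algebra_simps)
  have V: "x * y' - x' * y = n * v"
    unfolding v_def x' y' by (simp add: algebra_simps)
  have "(x * x' - K * y * y')\<^sup>2 - K * (x * y' - x' * y)\<^sup>2 = (x\<^sup>2 - K * y\<^sup>2) * (x'\<^sup>2 - K * y'\<^sup>2)"
    by (simp add: power2_eq_square algebra_simps)
  then have "(n * u)\<^sup>2 - K * (n * v)\<^sup>2 = n * n"
    using U V norm by simp
  then have "n\<^sup>2 * (u\<^sup>2 - K * v\<^sup>2) = n\<^sup>2 * 1"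
    by (simp add: power2_eq_square algebra_simps)
  then have "u\<^sup>2 - K * v\<^sup>2 = 1"
    using \<open>n \<noteq> 0\<close> by simp
  moreover have "v \<noteq> 0"
  proof
    assume "v = 0"
    then have xy: "x * y' = x' * y"
      using V by simp
    have "n * y'\<^sup>2 = (x * y')\<^sup>2 - K * y\<^sup>2 * y'\<^sup>2"
      by (simp add: norm(1)[symmetric] power2_eq_square algebra_simps)
    also have "\<dots> = n * y\<^sup>2"
      by (simp add: xy norm(2)[symmetric] power2_eq_square algebra_simps)
    finally have "y' = y"
      using \<open>n \<noteq> 0\<close> \<open>y > 0\<close> \<open>y' > 0\<close> by (simp add: power2_eq_iff)
    then show False
      using xy \<open>y > 0\<close> \<open>(x', y') \<noteq> (x, y)\<close> by simp
  qed
  ultimately show ?thesis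
    by blast
qed

lemma pell_nontrivial_solution:
  assumes "\<not> (\<exists>m. m ^ 2 = k)"
  shows "\<exists>u v :: int. u\<^sup>2 - int k * v\<^sup>2 = 1 \<and> v \<noteq> 0"
proof -
  define P where "P = {(x :: int, y :: int). 0 < y \<and> \<bar>x\<^sup>2 - int k * y\<^sup>2\<bar> \<le> 2 * int k + 1}"
  define nm where "nm = (\<lambda>(x :: int, y :: int). x\<^sup>2 - int k * y\<^sup>2)"
  define f where "f = (\<lambda>p. (nm p, fst p mod nm p, snd p mod nm p))"
  define B where "B = {-2 * int k - 1..2 * int k + 1}"
  have nm_nonzero: "nm p \<noteq> 0" if p_mem: "p \<in> P" for p
  proof -
    obtain x y where "p = (x, y)" "0 < y"
      using p_mem by (cases p) (auto simp: P_def)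
    then show ?thesis
      using nonsquare_sq_eq_mult_sq_imp_zero[OF assms, of x y] by (auto simp: nm_def)
  qed
  have "f p \<in> B \<times> B \<times> B" if "p \<in> P" for p
  proof -
    have "\<bar>nm p\<bar> \<le> 2 * int k + 1"
      using that by (auto simp: P_def nm_def)
    then show ?thesis
      using abs_mod_less[OF nm_nonzero[OF that], of "fst p"] abs_mod_less[OF nm_nonzero[OF that], of "snd p"] by (auto simp: f_def B_def abs_le_iff)
  qed
  then have "f ` P \<subseteq> B \<times> B \<times> B"
    by blast
  then have "finite (f ` P)"
    by (rule finite_subset) (simp add: B_def)
  moreover have "infinite P"
    using infinite_small_norm[OF assms] by (simp add: P_def)
  ultimately obtain p0 where inf: "infinite {p \<in> P. f p = f p0}"
    using pigeonhole_infinite by blast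
  then obtain p1 where p1: "p1 \<in> {p \<in> P. f p = f p0}"
    using infinite_imp_nonempty by blast
  from inf have "infinite ({p \<in> P. f p = f p0} - {p1})"
    by simp
  then obtain p2 where "p2 \<in> {p \<in> P. f p = f p0} - {p1}"
    using infinite_imp_nonempty by blast
  with p1 have p12: "p1 \<in> P" "p2 \<in> P" "f p1 = f p0" "f p2 = f p0" "p2 \<noteq> p1"
    by auto
  obtain x y x' y' where p: "p1 = (x, y)" "p2 = (x', y')"
    by fastforce
  have "x' mod nm p1 = x mod nm p1" "y' mod nm p1 = y mod nm p1" "nm p2 = nm p1"
    using p12(3,4) by (auto simp: f_def p)
  then show ?thesis
    using p12 nm_nonzero[OF p12(1)]
    by (intro pell_solution_of_congruent_pair[where x = x and y = y and x' = x' and y' = y'])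
       (auto simp: p nm_def P_def mod_eq_dvd_iff)
qed

lemma pell_solution_ge:
  assumes "\<not> (\<exists>m. m ^ 2 = k)"
  shows "\<exists>u v :: int. u\<^sup>2 - int k * v\<^sup>2 = 1 \<and> u > 0 \<and> v > 0 \<and> v \<ge> int n"
proof (induction n)
  case 0
  obtain u v :: int where uv: "u\<^sup>2 - int k * v\<^sup>2 = 1" "v \<noteq> 0"
    using pell_nontrivial_solution[OF assms] by blast
  have "u \<noteq> 0"
  proof
    assume "u = 0"
    then have "int k * v\<^sup>2 = -1"
      using uv(1) by simp
    moreover have "int k * v\<^sup>2 \<ge> 0"
      by simp
    ultimately show False
      by linarith
  qed
  then have "\<bar>u\<bar>\<^sup>2 - int k * \<bar>v\<bar>\<^sup>2 = 1 \<and> \<bar>u\<bar> > 0 \<and> \<bar>v\<bar> > 0 \<and> \<bar>v\<bar> \<ge> int 0"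
    using uv by simp
  then show ?case
    by blast
next
  case (Suc n)
  then obtain u v :: int where uv: "u\<^sup>2 - int k * v\<^sup>2 = 1" "u > 0" "v > 0" "v \<ge> int n"
    by blast
  define u' where "u' = u\<^sup>2 + int k * v\<^sup>2"
  define v' where "v' = 2 * u * v"
  have "u'\<^sup>2 - int k * v'\<^sup>2 = (u\<^sup>2 - int k * v\<^sup>2)\<^sup>2"
    by (simp add: u'_def v'_def power2_eq_square algebra_simps)
  with uv(1) have "u'\<^sup>2 - int k * v'\<^sup>2 = 1"
    by simp
  moreover have "u' > 0"
    using uv by (simp add: u'_def add_pos_nonneg)
  moreover have "v' \<ge> 2 * v"
    using uv by (simp add: v'_def)
  ultimately show ?case
    using uv(3,4) by (intro exI[of _ u'] exI[of _ v']) auto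
qed

lemma pell_solution_congruent_one:
  fixes B :: int
  assumes "\<not> (\<exists>m. m ^ 2 = k)"
  obtains c d :: int where "(1 + 2 * int k * c)\<^sup>2 - int k * (2 * d)\<^sup>2 = 1" "1 + 2 * int k * c > B" "d > 0"
proof -
  obtain u v :: int where uv: "u\<^sup>2 - int k * v\<^sup>2 = 1" "u > 0" "v > 0" "v \<ge> int (nat B)"
    using pell_solution_ge[OF assms] by blast
  have "(1 + 2 * int k * v\<^sup>2)\<^sup>2 - int k * (2 * (u * v))\<^sup>2
      = 1 + 4 * int k * v\<^sup>2 * (1 + int k * v\<^sup>2 - u\<^sup>2)"
    by (simp add: power2_eq_square algebra_simps)
  also have "\<dots> = 1"
    using uv(1) by simp
  finally have pell: "(1 + 2 * int k * v\<^sup>2)\<^sup>2 - int k * (2 * (u * v))\<^sup>2 = 1" .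
  have "k \<ge> 1"
    using assms by (metis less_one not_less zero_power2)
  then have "v\<^sup>2 \<le> int k * v\<^sup>2"
    by (simp add: mult_le_cancel_right1)
  moreover have "v \<le> v\<^sup>2"
    using uv(3) by (simp add: power2_eq_square)
  ultimately have "1 + 2 * int k * v\<^sup>2 > B"
    using uv(4) by linarith
  then show ?thesis
    using that pell uv(2,3) by simp
qed

section \<open>Triangular numbers\<close>

lemma two_mult_tri: "2 * tri m = m * (m + 1)"
  unfolding tri_def by simp

lemma tri_eq_mult_tri_iff_norm:
  "tri \<xi> = k * tri t \<longleftrightarrow> (2 * int \<xi> + 1)\<^sup>2 - int k * (2 * int t + 1)\<^sup>2 = 1 - int k"
proof -
  have "tri \<xi> = k * tri t \<longleftrightarrow> 2 * tri \<xi> = k * (2 * tri t)"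
    by simp
  also have "\<dots> \<longleftrightarrow> int (\<xi> * (\<xi> + 1)) = int (k * (t * (t + 1)))"
    by (simp only: two_mult_tri of_nat_eq_iff)
  also have "\<dots> \<longleftrightarrow> (2 * int \<xi> + 1)\<^sup>2 - int k * (2 * int t + 1)\<^sup>2 = 1 - int k"
  proof -
    have "(2 * int \<xi> + 1)\<^sup>2 - int k * (2 * int t + 1)\<^sup>2 - (1 - int k)
        = 4 * (int (\<xi> * (\<xi> + 1)) - int (k * (t * (t + 1))))"
      by (simp add: power2_eq_square algebra_simps)
    then show ?thesis
      by (smt (verit))
  qed
  finally show ?thesis .
qed

lemma tri_solution_of_odd_norm:
  fixes X Y :: int
  assumes norm: "X\<^sup>2 - int k * Y\<^sup>2 = 1 - int k" and "odd X" "odd Y" "X > 0"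
  obtains \<xi> t where "X = 2 * int \<xi> + 1" "tri \<xi> = k * tri t"
proof -
  define \<xi> where "\<xi> = nat (X div 2)"
  define t where "t = nat (\<bar>Y\<bar> div 2)"
  have X: "X = 2 * int \<xi> + 1"
    using \<open>odd X\<close> \<open>X > 0\<close> by (simp add: \<xi>_def odd_two_times_div_two_succ)
  have "\<bar>Y\<bar> = 2 * int t + 1"
    using \<open>odd Y\<close> by (simp add: t_def odd_two_times_div_two_succ)
  then have "(2 * int \<xi> + 1)\<^sup>2 - int k * (2 * int t + 1)\<^sup>2 = 1 - int k"
    using norm X by (metis power2_abs)
  then show ?thesis
    using that X by (simp add: tri_eq_mult_tri_iff_norm)
qed

text \<open>Positivity of the first coordinate of \<open>(a + b\<surd>K)(-X + Y\<surd>K)\<close>.\<close>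

lemma norm_transform_pos:
  fixes K X Y a b :: int
  assumes norm: "X\<^sup>2 - K * Y\<^sup>2 = 1 - K" and unit: "a\<^sup>2 - K * b\<^sup>2 = 1"
    and "K \<ge> 2" "0 < X" "X < a" "0 \<le> Y" "0 \<le> b"
  shows "a * X < K * b * Y"
proof -
  have "(K * b * Y)\<^sup>2 = (a\<^sup>2 - 1) * (K * Y\<^sup>2)"
    using unit by (simp add: power2_eq_square algebra_simps)
  also have "\<dots> = (a\<^sup>2 - 1) * (X\<^sup>2 + (K - 1))"
    using norm by (simp add: algebra_simps)
  finally have eq: "(K * b * Y)\<^sup>2 = (a\<^sup>2 - 1) * X\<^sup>2 + (a\<^sup>2 - 1) * (K - 1)"
    by (simp add: algebra_simps)
  have "(X + 1)\<^sup>2 \<le> a\<^sup>2"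
    using assms(4,5) by (intro power_mono) auto
  then have "X\<^sup>2 < a\<^sup>2 - 1"
    using assms(4) by (simp add: power2_eq_square algebra_simps)
  moreover have "0 \<le> a\<^sup>2 - 1"
    using calculation zero_le_power2[of X] by linarith
  then have "a\<^sup>2 - 1 \<le> (a\<^sup>2 - 1) * (K - 1)"
    using mult_left_mono[of 1 "K - 1" "a\<^sup>2 - 1"] \<open>K \<ge> 2\<close> by simp
  ultimately have "(a * X)\<^sup>2 < (K * b * Y)\<^sup>2"
    unfolding eq by (simp add: power_mult_distrib algebra_simps)
  moreover have "K * b * Y \<ge> 0"
    using assms(3,6,7) by simp
  ultimately show ?thesis
    by (rule power_less_imp_less_base)
qed

lemma tri_solution_reflect:
  assumes "\<not> (\<exists>m. m ^ 2 = k)" "k \<ge> 2" "tri \<xi> = k * tri t"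
  obtains \<xi>' t' where "tri \<xi>' = k * tri t'" "k dvd \<xi>' + \<xi> + 1"
proof -
  define K where "K = int k"
  define X where "X = 2 * int \<xi> + 1"
  define Y where "Y = 2 * int t + 1"
  have norm: "X\<^sup>2 - K * Y\<^sup>2 = 1 - K"
    using assms(3) by (simp add: X_def Y_def K_def tri_eq_mult_tri_iff_norm)
  obtain c d where unit: "(1 + 2 * K * c)\<^sup>2 - K * (2 * d)\<^sup>2 = 1"
    and large: "1 + 2 * K * c > X" and "d > 0"
    using pell_solution_congruent_one[OF assms(1)] unfolding K_def by blast
  define X' where "X' = K * (2 * d) * Y - (1 + 2 * K * c) * X"
  define Y' where "Y' = (1 + 2 * K * c) * Y - 2 * d * X"
  have "X'\<^sup>2 - K * Y'\<^sup>2 = ((1 + 2 * K * c)\<^sup>2 - K * (2 * d)\<^sup>2) * (X\<^sup>2 - K * Y\<^sup>2)"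
    unfolding X'_def Y'_def by (simp add: power2_eq_square algebra_simps)
  then have norm': "X'\<^sup>2 - int k * Y'\<^sup>2 = 1 - int k"
    using unit norm by (simp add: K_def)
  have "X' > 0"
    using norm_transform_pos[OF norm unit] assms(2) large \<open>d > 0\<close>
    by (simp add: X'_def K_def X_def Y_def)
  have X': "X' = 2 * K * (d * Y - c * X) - X"
    by (simp add: X'_def algebra_simps)
  moreover have "Y' = 2 * (K * c * Y - d * X) + Y"
    by (simp add: Y'_def algebra_simps)
  ultimately have "odd X'" "odd Y'"
    by (simp_all add: X_def Y_def)
  then obtain \<xi>' t' where \<xi>': "X' = 2 * int \<xi>' + 1" and sol: "tri \<xi>' = k * tri t'"
    using tri_solution_of_odd_norm[OF norm' _ _ \<open>X' > 0\<close>] by blast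
  have "int (\<xi>' + \<xi> + 1) = K * (d * Y - c * X)"
    using X' \<xi>' by (simp add: X_def algebra_simps)
  then have "k dvd \<xi>' + \<xi> + 1"
    by (metis K_def dvd_triv_left int_dvd_int_iff)
  with sol show ?thesis
    using that by blast
qed

lemma even_card_fixpoint_free_involution:
  assumes "finite A" "\<And>x. x \<in> A \<Longrightarrow> h x \<in> A" "\<And>x. x \<in> A \<Longrightarrow> h (h x) = x"
    "\<And>x. x \<in> A \<Longrightarrow> h x \<noteq> x"
  shows "even (card A)"
proof -
  have "(\<Sum>x\<in>A. 1 :: bit) = 0"
    by (rule sum_involution_eq_0[where h = h]) (use assms in auto)
  then show ?thesis
    using even_of_nat[where 'a = bit, of "card A"] by simp
qed

lemma sum_involution_complement:
  fixes A :: "'a :: comm_semiring_1 set"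
  assumes "\<And>x. x \<in> A \<Longrightarrow> h x \<in> A" "\<And>x. x \<in> A \<Longrightarrow> h (h x) = x"
    "\<And>x. x \<in> A \<Longrightarrow> x + h x = c"
  shows "2 * (\<Sum>x\<in>A. x) = of_nat (card A) * c"
proof -
  have "bij_betw h A A"
    by (rule bij_betwI[where g = h]) (use assms in auto)
  then have "(\<Sum>x\<in>A. h x) = (\<Sum>x\<in>A. x)"
    by (rule sum.reindex_bij_betw)
  then have "2 * (\<Sum>x\<in>A. x) = (\<Sum>x\<in>A. x + h x)"
    by (simp add: sum.distrib mult_2)
  also have "\<dots> = of_nat (card A) * c"
    using assms(3) by simp
  finally show ?thesis .
qed

lemma mod_eq_complement_if_dvd:
  fixes a b k :: nat
  assumes "k dvd a + b + 1"
  shows "a mod k = k - 1 - b mod k"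
proof (cases "k = 0")
  case False
  have "a + b + 1 = k * (a div k + b div k) + (a mod k + b mod k + 1)"
    by (simp add: algebra_simps)
  then have "k dvd a mod k + b mod k + 1"
    using assms by (metis dvd_add_right_iff dvd_triv_left)
  then obtain c where c: "a mod k + b mod k + 1 = k * c"
    by blast
  have "a mod k < k" "b mod k < k"
    using False by simp_all
  then have "k * c < k * 2"
    using c by linarith
  moreover have "c \<noteq> 0"
    using c by (intro notI) simp
  ultimately have "c = 1"
    by simp
  then show ?thesis
    using c by simp
qed (use assms in simp)

lemma residue_set_subset_lessThan: "k > 0 \<Longrightarrow> residue_set k \<subseteq> {..<k}"
  unfolding residue_set_def by auto

lemma zero_mem_residue_set: "0 \<in> residue_set k"
  unfolding residue_set_def by (auto intro!: exI[of _ 0] simp: tri_def)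

lemma residue_set_complement:
  assumes "\<not> (\<exists>m. m ^ 2 = k)" "k \<ge> 2" "\<mu> \<in> residue_set k"
  shows "k - 1 - \<mu> \<in> residue_set k"
proof -
  obtain \<xi> t where \<mu>: "\<mu> = \<xi> mod k" and "tri \<xi> = k * tri t"
    using assms(3) unfolding residue_set_def by blast
  then obtain \<xi>' t' where "tri \<xi>' = k * tri t'" "k dvd \<xi>' + \<xi> + 1"
    using tri_solution_reflect[OF assms(1,2)] by blast
  moreover from this(2) have "k - 1 - \<mu> = \<xi>' mod k"
    unfolding \<mu> by (rule mod_eq_complement_if_dvd[symmetric])
  ultimately show ?thesis
    unfolding residue_set_def by blast
qed

text \<open>\<open>k = 2\<mu> + 1\<close> would force \<open>k\<close> to divide \<open>(2\<xi> + 1)\<^sup>2 = 8 T\<^sub>\<xi> + 1 = 8 k T\<^sub>t + 1\<close>.\<close>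

lemma residue_set_complement_neq:
  assumes "k \<ge> 2" "\<mu> \<in> residue_set k"
  shows "k - 1 - \<mu> \<noteq> \<mu>"
proof
  assume "k - 1 - \<mu> = \<mu>"
  obtain \<xi> t where \<xi>: "\<mu> = \<xi> mod k" "tri \<xi> = k * tri t"
    using assms(2) unfolding residue_set_def by blast
  with \<open>k - 1 - \<mu> = \<mu>\<close> assms(1) have k: "2 * (\<xi> mod k) + 1 = k"
    using mod_less_divisor[of k \<xi>] by linarith
  have "2 * \<xi> + 1 = 2 * (k * (\<xi> div k)) + (2 * (\<xi> mod k) + 1)"
    using mult_div_mod_eq[of k \<xi>] by linarith
  also have "\<dots> = k * (2 * (\<xi> div k) + 1)"
    unfolding k by (simp add: algebra_simps)
  finally have "2 * \<xi> + 1 = k * (2 * (\<xi> div k) + 1)" .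
  then have "k dvd (2 * \<xi> + 1)\<^sup>2"
    by (simp add: power2_eq_square)
  moreover have "(2 * \<xi> + 1)\<^sup>2 = k * (8 * tri t) + 1"
    using two_mult_tri[of \<xi>] \<xi>(2) by (simp add: power2_eq_square algebra_simps)
  ultimately have "k dvd 1"
    by (metis dvd_add_right_iff dvd_triv_left)
  with assms(1) show False
    by simp
qed

theorem proposition1:
  fixes k :: nat
  assumes "k \<ge> 2" and "\<not> (\<exists>m. m ^ 2 = k)"
  shows "0 \<in> residue_set k \<and> k - 1 \<in> residue_set k
    \<and> (\<forall>\<mu>\<in>residue_set k. k - 1 - \<mu> \<in> residue_set k)
    \<and> even (card (residue_set k))
    \<and> 2 * (\<Sum>\<mu>\<in>residue_set k. \<mu>) = (k - 1) * card (residue_set k)"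
proof -
  let ?R = "residue_set k" and ?h = "\<lambda>\<mu>. k - 1 - \<mu>"
  have less: "\<mu> < k" if "\<mu> \<in> ?R" for \<mu>
    using residue_set_subset_lessThan[of k] assms(1) that by auto
  have closed: "?h \<mu> \<in> ?R" if "\<mu> \<in> ?R" for \<mu>
    using residue_set_complement[OF assms(2,1) that] .
  have "finite ?R"
    using residue_set_subset_lessThan[of k] assms(1) finite_subset by auto
  moreover have "?h (?h \<mu>) = \<mu>" "\<mu> + ?h \<mu> = k - 1" if "\<mu> \<in> ?R" for \<mu>
    using less[OF that] by auto
  ultimately have "even (card ?R)" "2 * (\<Sum>\<mu>\<in>?R. \<mu>) = card ?R * (k - 1)"
    using closed residue_set_complement_neq[OF assms(1)]
      even_card_fixpoint_free_involution[of ?R ?h] sum_involution_complement[of ?R ?h "k - 1"]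
    by simp_all
  then show ?thesis
    using zero_mem_residue_set closed[OF zero_mem_residue_set] closed
    by (simp add: mult.commute)
qed

end
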